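(* Suppose the solution sets of (P) and (D) are nonempty, $A$ has full row rank, $\{\tau_k\}$ is positive nonincreasing with $\tau_k\downarrow\tau_\infty>0$, and let $\{(y^l,x^l)\}$ be the infinite sequence generated by Algorithm Snipal with stopping criterion (A'): $\|\nabla\psi_l(y^{l+1})\|\le\frac{\min(\sqrt{\tau_l},1)}{\sigma_l}\epsilon_l$, $\epsilon_l\ge0$, $\sum_l\epsilon_l<\infty$. For $k\ge0$ let $\bar y^{k+1}$ be an exact minimizer of $L_{\sigma_k}(y;x^k)$ over $y\in\mathbb{R}^m$ (assumed to exist). Then: (a) $\bar x^{k+1}:=\Pi_K(x^k-\sigma_k(c-A^T\bar y^{k+1}))$ is the unique solution of $\min\{c^Tx+\frac{1}{2\sigma_k}\|x-x^k\|^2\mid Ax=b,\ x\in K\}$; (b) there exists $\bar\sigma>0$, independent of $k$, such that whenever $\sigma_k\ge\bar\sigma$, $\bar x^{k+1}$ solves (P); (c) if $x^k$ is a solution of (P), then $\bar y^{k+1}$ solves (D).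
   Context: Data: $A\in\mathbb{R}^{m\times n}$, $b\in\mathbb{R}^m$, $c\in\mathbb{R}^n$, $K=\{x\in\mathbb{R}^n\mid l\le x\le u\}$ with $l_i\in[-\infty,\infty)$, $u_i\in(-\infty,\infty]$; $\delta_K$ its indicator, $\delta_K^*$ its conjugate, $\Pi_K$ the projection onto $K$. (P): $\min\{c^Tx+\delta_K(x)\mid Ax=b\}$; (D): $\max\{-\delta_K^*(A^Ty-c)+b^Ty\}$. $L_\sigma(y;x)=-b^Ty-\langle\Pi_K(x-\sigma(c-A^Ty)),c-A^Ty\rangle-\frac{1}{2\sigma}\|\Pi_K(x-\sigma(c-A^Ty))-x\|^2$. Algorithm Snipal: given $(x^0,y^0)$, $\sigma_0>0$, nondecreasing $\sigma_k\uparrow\sigma_\infty\le\infty$; for $k=0,1,\dots$: compute $y^{k+1}$ as an approximate minimizer of $\psi_k(y):=L_{\sigma_k}(y;x^k)+\frac{\tau_k}{2\sigma_k}\|y-y^k\|^2$, then $x^{k+1}=\Pi_K(x^k-\sigma_k(c-A^Ty^{k+1}))$. $\nabla\psi_k(y)=-b+A\Pi_K(x^k+\sigma_k(A^Ty-c))+\tau_k\sigma_k^{-1}(y-y^k)$. *)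

theory Defs
  imports "HOL-Analysis.Analysis"
begin

definition boxK :: "('n::finite \<Rightarrow> ereal) \<Rightarrow> ('n \<Rightarrow> ereal) \<Rightarrow> (real^'n) set" where
  "boxK l u = {x. \<forall>i. l i \<le> ereal (x $ i) \<and> ereal (x $ i) \<le> u i}"

definition projK :: "('n::finite \<Rightarrow> ereal) \<Rightarrow> ('n \<Rightarrow> ereal) \<Rightarrow> real^'n \<Rightarrow> real^'n" where
  "projK l u z = closest_point (boxK l u) z"

definition supp_fun :: "(real^'n::finite) set \<Rightarrow> real^'n \<Rightarrow> ereal" where
  "supp_fun S z = (SUP x\<in>S. ereal (z \<bullet> x))"

definition primal_sol :: "real^'n^'m \<Rightarrow> real^'m \<Rightarrow> real^'n \<Rightarrow> ('n::finite \<Rightarrow> ereal) \<Rightarrow> ('n \<Rightarrow> ereal) \<Rightarrow> real^'n \<Rightarrow> bool" where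
  "primal_sol A b c l u x \<longleftrightarrow> x \<in> boxK l u \<and> A *v x = b \<and>
     (\<forall>x'. x' \<in> boxK l u \<and> A *v x' = b \<longrightarrow> c \<bullet> x \<le> c \<bullet> x')"

definition dual_obj :: "real^'n^'m \<Rightarrow> real^'m \<Rightarrow> real^'n \<Rightarrow> ('n::finite \<Rightarrow> ereal) \<Rightarrow> ('n \<Rightarrow> ereal) \<Rightarrow> real^'m \<Rightarrow> ereal" where
  "dual_obj A b c l u y = ereal (b \<bullet> y) - supp_fun (boxK l u) (transpose A *v y - c)"

definition dual_sol :: "real^'n^'m \<Rightarrow> real^'m \<Rightarrow> real^'n \<Rightarrow> ('n::finite \<Rightarrow> ereal) \<Rightarrow> ('n \<Rightarrow> ereal) \<Rightarrow> real^'m \<Rightarrow> bool" where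
  "dual_sol A b c l u y \<longleftrightarrow> dual_obj A b c l u y \<noteq> -\<infinity> \<and>
     (\<forall>y'. dual_obj A b c l u y' \<le> dual_obj A b c l u y)"

definition Lsig :: "real^'n^'m \<Rightarrow> real^'m \<Rightarrow> real^'n \<Rightarrow> ('n::finite \<Rightarrow> ereal) \<Rightarrow> ('n \<Rightarrow> ereal) \<Rightarrow> real \<Rightarrow> real^'m \<Rightarrow> real^'n \<Rightarrow> real" where
  "Lsig A b c l u \<sigma> y x =
     (let w = c - transpose A *v y; p = projK l u (x - \<sigma> *\<^sub>R w)
      in - (b \<bullet> y) - p \<bullet> w - (1 / (2 * \<sigma>)) * (norm (p - x))\<^sup>2)"

text \<open>Gradient of psi_k(y) = L_sigma(y; xk) + tau/(2 sigma) ||y - yk||^2.\<close>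
definition grad_psi :: "real^'n^'m \<Rightarrow> real^'m \<Rightarrow> real^'n \<Rightarrow> ('n::finite \<Rightarrow> ereal) \<Rightarrow> ('n \<Rightarrow> ereal) \<Rightarrow> real \<Rightarrow> real \<Rightarrow> real^'n \<Rightarrow> real^'m \<Rightarrow> real^'m \<Rightarrow> real^'m" where
  "grad_psi A b c l u \<sigma> \<tau> xk yk y =
     - b + A *v projK l u (xk + \<sigma> *\<^sub>R (transpose A *v y - c)) + (\<tau> / \<sigma>) *\<^sub>R (y - yk)"

end

theory Submission
  imports Defs
begin

(* L_sigma(.; x) is minus the dual function of the proximal subproblem in (a). At a minimiser
   ybar the projected point xbar is therefore feasible, and the three-point inequality of the
   projection onto K makes xbar the unique solution of (a); if x already solves (P), the same
   inequality forces xbar = x, and the projection condition at x is exactly strong duality for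
   ybar, which gives (c).
   For (b): under (A') the Snipal iterates are quasi-Fejer monotone with respect to a KKT pair,
   so they stay bounded. The optimality condition of the prox step puts c within distance
   |xbar - x^k| / sigma_k of the polyhedral KKT cone belonging to the active bounds of xbar;
   there are finitely many such cones and all are closed, so c lies in the right one as soon as
   sigma_k is large, and then xbar solves (P). *)

section \<open>The box and its normal cones\<close>

lemma closed_boxK: "closed (boxK l u)"
proof -
  have "boxK l u = (\<Inter>i. {x. l i \<le> ereal (x $ i)} \<inter> {x. ereal (x $ i) \<le> u i})"
    unfolding boxK_def by auto
  moreover have "closed ({x::real^_. l i \<le> ereal (x $ i)} \<inter> {x. ereal (x $ i) \<le> u i})" for i
    by (intro closed_Int closed_Collect_le continuous_intros)
  ultimately show ?thesis by (simp add: closed_INT)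
qed

lemma convex_boxK: "convex (boxK l u)"
  unfolding convex_def boxK_def
proof (intro CollectI allI impI ballI conjI)
  fix x y and s t :: real and i
  assume x: "x \<in> {x. \<forall>i. l i \<le> ereal (x $ i) \<and> ereal (x $ i) \<le> u i}"
    and y: "y \<in> {x. \<forall>i. l i \<le> ereal (x $ i) \<and> ereal (x $ i) \<le> u i}"
    and st: "0 \<le> s" "0 \<le> t" "s + t = 1"
  have "s * x$i + t * y$i \<le> max (x$i) (y$i)"
    using st by (intro convex_bound_le) auto
  moreover have "s * (- x$i) + t * (- y$i) \<le> - min (x$i) (y$i)"
    using st by (intro convex_bound_le) auto
  ultimately have min_le: "min (ereal (x$i)) (ereal (y$i)) \<le> ereal (s * x$i + t * y$i)"
    and le_max: "ereal (s * x$i + t * y$i) \<le> max (ereal (x$i)) (ereal (y$i))"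
    by (auto simp: min_def max_def)
  have "l i \<le> min (ereal (x$i)) (ereal (y$i))" and "max (ereal (x$i)) (ereal (y$i)) \<le> u i"
    using x y by auto
  with min_le le_max show "l i \<le> ereal ((s *\<^sub>R x + t *\<^sub>R y) $ i)" "ereal ((s *\<^sub>R x + t *\<^sub>R y) $ i) \<le> u i"
    by (simp_all only: vector_add_component vector_scaleR_component real_scaleR_def)
qed

lemma eventually_ereal_le_along_ray:
  assumes "l \<le> ereal z" "l = ereal z \<Longrightarrow> 0 \<le> d"
  shows "eventually (\<lambda>t. l \<le> ereal (z + t * d)) (at_right 0)"
proof (cases "l = ereal z")
  case True
  then show ?thesis
    using assms(2) eventually_at_right_less[of 0] by (auto elim: eventually_mono)
next
  case False
  have "((\<lambda>t. z + t * d) \<longlongrightarrow> z) (at_right 0)"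
    by (auto intro!: tendsto_eq_intros)
  then have "((\<lambda>t. ereal (z + t * d)) \<longlongrightarrow> ereal z) (at_right 0)"
    by simp
  moreover have "l < ereal z"
    using False assms(1) by simp
  ultimately have "eventually (\<lambda>t. l < ereal (z + t * d)) (at_right 0)"
    by (rule order_tendstoD(1))
  then show ?thesis
    by (rule eventually_mono) simp
qed

lemma eventually_le_ereal_along_ray:
  assumes "ereal z \<le> u" "ereal z = u \<Longrightarrow> d \<le> 0"
  shows "eventually (\<lambda>t. ereal (z + t * d) \<le> u) (at_right 0)"
proof -
  have "eventually (\<lambda>t. - u \<le> ereal (- z + t * - d)) (at_right 0)"
    using assms
    by (intro eventually_ereal_le_along_ray) (auto simp: ereal_minus_le_minus simp flip: uminus_ereal.simps)
  then show ?thesis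
  proof (rule eventually_mono)
    fix t
    assume "- u \<le> ereal (- z + t * - d)"
    then have "- u \<le> - ereal (z + t * d)"
      by (simp add: algebra_simps)
    then show "ereal (z + t * d) \<le> u"
      by (simp only: ereal_minus_le_minus)
  qed
qed

lemma feasible_direction_boxK:
  assumes "z \<in> boxK l u"
    and "\<And>i. ereal (z$i) = l i \<Longrightarrow> 0 \<le> d$i" "\<And>i. ereal (z$i) = u i \<Longrightarrow> d$i \<le> 0"
  obtains t where "t > 0" "z + t *\<^sub>R d \<in> boxK l u"
proof -
  have "eventually (\<lambda>t. l i \<le> ereal (z$i + t * d$i) \<and> ereal (z$i + t * d$i) \<le> u i) (at_right 0)" for i
    using assms unfolding boxK_def
    by (intro eventually_conj eventually_ereal_le_along_ray eventually_le_ereal_along_ray) auto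
  then have "eventually (\<lambda>t. \<forall>i. l i \<le> ereal (z$i + t * d$i) \<and> ereal (z$i + t * d$i) \<le> u i) (at_right 0)"
    by (rule eventually_all_finite)
  then have "eventually (\<lambda>t. 0 < t \<and> z + t *\<^sub>R d \<in> boxK l u) (at_right 0)"
    unfolding boxK_def by (intro eventually_conj eventually_at_right_less) simp
  then show ?thesis
    using that eventually_happens'[OF trivial_limit_at_right_real] by blast
qed

lemma projK_in_boxK: "boxK l u \<noteq> {} \<Longrightarrow> projK l u v \<in> boxK l u"
  unfolding projK_def by (rule closest_point_in_set[OF closed_boxK])

lemma projK_inner_le: "w \<in> boxK l u \<Longrightarrow> (v - projK l u v) \<bullet> (w - projK l u v) \<le> 0"
  unfolding projK_def by (rule closest_point_dot[OF convex_boxK closed_boxK])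

definition active_bounds :: "('n::finite \<Rightarrow> ereal) \<Rightarrow> ('n \<Rightarrow> ereal) \<Rightarrow> real^'n \<Rightarrow> 'n \<Rightarrow> bool \<times> bool" where
  "active_bounds l u z i = (ereal (z$i) = l i, ereal (z$i) = u i)"

definition sign_cone :: "('n::finite \<Rightarrow> bool \<times> bool) \<Rightarrow> (real^'n) set" where
  "sign_cone P = {h. \<forall>i. (0 < h$i \<longrightarrow> fst (P i)) \<and> (h$i < 0 \<longrightarrow> snd (P i))}"

lemma sign_cone_active_bounds_iff:
  assumes z: "z \<in> boxK l u"
  shows "h \<in> sign_cone (active_bounds l u z) \<longleftrightarrow> (\<forall>w\<in>boxK l u. 0 \<le> h \<bullet> (w - z))"
proof
  assume h: "h \<in> sign_cone (active_bounds l u z)"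
  show "\<forall>w\<in>boxK l u. 0 \<le> h \<bullet> (w - z)"
  proof
    fix w
    assume w: "w \<in> boxK l u"
    have "0 \<le> h$i * (w$i - z$i)" for i
    proof (cases "0 < h$i" "h$i < 0" rule: case_split[case_product case_split])
      case True_False
      then have "ereal (z$i) = l i"
        using h by (simp add: sign_cone_def active_bounds_def)
      moreover have "l i \<le> ereal (w$i)"
        using w by (simp add: boxK_def)
      ultimately have "z$i \<le> w$i"
        by (metis ereal_less_eq(3))
      then show ?thesis using True_False by simp
    next
      case False_True
      then have "ereal (z$i) = u i"
        using h by (simp add: sign_cone_def active_bounds_def)
      moreover have "ereal (w$i) \<le> u i"
        using w by (simp add: boxK_def)
      ultimately have "w$i \<le> z$i"
        by (metis ereal_less_eq(3))
      then show ?thesis using False_True by (simp add: mult_nonpos_nonpos)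
    qed auto
    then show "0 \<le> h \<bullet> (w - z)"
      unfolding inner_vec_def by (simp add: sum_nonneg)
  qed
next
  assume normal: "\<forall>w\<in>boxK l u. 0 \<le> h \<bullet> (w - z)"
  have nonneg: "0 \<le> h \<bullet> d"
    if d: "\<And>i. ereal (z$i) = l i \<Longrightarrow> 0 \<le> d$i" "\<And>i. ereal (z$i) = u i \<Longrightarrow> d$i \<le> 0" for d
  proof -
    obtain t where "t > 0" "z + t *\<^sub>R d \<in> boxK l u"
      using feasible_direction_boxK[OF z d] .
    then show ?thesis
      using normal by (fastforce simp: zero_le_mult_iff)
  qed
  have "ereal (z$i) = l i" if "0 < h$i" for i
  proof (rule ccontr)
    assume "ereal (z$i) \<noteq> l i"
    then have "0 \<le> h \<bullet> - axis i 1"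
      by (intro nonneg) (auto simp: axis_def)
    then show False
      using that by (simp add: inner_axis)
  qed
  moreover have "ereal (z$i) = u i" if "h$i < 0" for i
  proof (rule ccontr)
    assume "ereal (z$i) \<noteq> u i"
    then have "0 \<le> h \<bullet> axis i 1"
      by (intro nonneg) (auto simp: axis_def)
    then show False
      using that by (simp add: inner_axis)
  qed
  ultimately show "h \<in> sign_cone (active_bounds l u z)"
    by (simp add: sign_cone_def active_bounds_def)
qed

section \<open>KKT conditions for (P)\<close>

lemma inner_transpose_mult:
  fixes A :: "real^'n::finite^'m::finite"
  shows "(transpose A *v y) \<bullet> z = y \<bullet> (A *v z)"
  by (simp add: dot_lmul_matrix)

lemma separate_point_convex_cone:
  fixes S :: "'a::euclidean_space set"
  assumes "convex_cone S" "closed S" "c \<notin> S"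
  obtains d where "\<And>m. m \<in> S \<Longrightarrow> 0 \<le> d \<bullet> m" "d \<bullet> c < 0"
proof -
  obtain d e where de: "d \<bullet> c < e" "\<And>m. m \<in> S \<Longrightarrow> e < d \<bullet> m"
    using separating_hyperplane_closed_point assms convex_cone_def by metis
  have "e < 0"
    using de(2)[OF convex_cone_contains_0[OF assms(1)]] by simp
  have "0 \<le> d \<bullet> m" if "m \<in> S" for m
  proof (rule ccontr)
    assume "\<not> 0 \<le> d \<bullet> m"
    then have "(e / (d \<bullet> m)) *\<^sub>R m \<in> S"
      using \<open>e < 0\<close> that by (intro convex_cone_scaleR[OF assms(1)]) (auto simp: divide_nonpos_neg)
    then show False
      using de(2) \<open>\<not> 0 \<le> d \<bullet> m\<close> by fastforce
  qed
  then show ?thesis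
    using that de(1) \<open>e < 0\<close> by force
qed

lemma convex_cone_sum:
  assumes "convex_cone S" "\<And>i. i \<in> I \<Longrightarrow> f i \<in> S"
  shows "sum f I \<in> S"
  using assms(2)
proof (induction I rule: infinite_finite_induct)
  case (insert i I)
  then show ?case by (simp add: convex_cone_add[OF assms(1)])
qed (simp_all add: convex_cone_contains_0[OF assms(1)])

lemma scaleR_mem_convex_cone_hull:
  assumes "0 < a \<Longrightarrow> g \<in> G" "a < 0 \<Longrightarrow> - g \<in> G"
  shows "a *\<^sub>R g \<in> convex_cone hull G"
proof (cases a "0::real" rule: linorder_cases)
  case less
  then have "(- a) *\<^sub>R (- g) \<in> convex_cone hull G"
    using assms(2) by (intro convex_cone_hull_mul hull_inc) auto
  then show ?thesis by simp
next
  case greater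
  then show ?thesis
    using assms(1) by (intro convex_cone_hull_mul hull_inc) auto
qed (simp add: convex_cone_hull_contains_0)

definition kkt_cone :: "real^'n::finite^'m::finite \<Rightarrow> ('n \<Rightarrow> bool \<times> bool) \<Rightarrow> (real^'n) set" where
  "kkt_cone A P = {transpose A *v y + h | y h. h \<in> sign_cone P}"

lemma convex_cone_kkt_cone: "convex_cone (kkt_cone A P)"
  unfolding convex_cone_iff
proof (intro conjI ballI allI impI)
  show "0 \<in> kkt_cone A P"
    unfolding kkt_cone_def sign_cone_def by (intro CollectI exI[of _ 0]) simp
next
  fix v w
  assume "v \<in> kkt_cone A P" "w \<in> kkt_cone A P"
  then obtain y h y' h' where "v = transpose A *v y + h" "w = transpose A *v y' + h'"
    and "h \<in> sign_cone P" "h' \<in> sign_cone P"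
    unfolding kkt_cone_def by blast
  moreover have "h + h' \<in> sign_cone P"
    using \<open>h \<in> sign_cone P\<close> \<open>h' \<in> sign_cone P\<close> unfolding sign_cone_def
    by (auto; smt (verit))
  ultimately show "v + w \<in> kkt_cone A P"
    unfolding kkt_cone_def
    by (intro CollectI exI[of _ "y + y'"] exI[of _ "h + h'"]) (simp add: matrix_vector_right_distrib)
next
  fix v and a :: real
  assume "v \<in> kkt_cone A P" "0 \<le> a"
  then obtain y h where "v = transpose A *v y + h" "h \<in> sign_cone P"
    unfolding kkt_cone_def by blast
  moreover have "a *\<^sub>R h \<in> sign_cone P"
    using \<open>h \<in> sign_cone P\<close> \<open>0 \<le> a\<close>
    unfolding sign_cone_def by (auto simp: zero_less_mult_iff mult_less_0_iff)
  ultimately show "a *\<^sub>R v \<in> kkt_cone A P"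
    unfolding kkt_cone_def
    by (intro CollectI exI[of _ "a *\<^sub>R y"] exI[of _ "a *\<^sub>R h"])
      (simp add: matrix_vector_mult_scaleR scaleR_right_distrib)
qed

lemma transpose_mult_in_kkt_cone: "transpose A *v y \<in> kkt_cone A P"
  unfolding kkt_cone_def sign_cone_def by (intro CollectI exI[of _ y] exI[of _ 0]) simp

lemma sign_cone_subset_kkt_cone: "sign_cone P \<subseteq> kkt_cone A P"
  unfolding kkt_cone_def by (force intro: exI[of _ 0])

lemma axis_in_sign_cone:
  "fst (P i) \<Longrightarrow> axis i 1 \<in> sign_cone P" "snd (P i) \<Longrightarrow> - axis i 1 \<in> sign_cone P"
  unfolding sign_cone_def by (simp_all add: axis_def)

lemma kkt_cone_finitely_generated:
  obtains G where "finite G" "kkt_cone A P = convex_cone hull G"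
proof
  define G where "G = range (\<lambda>j. transpose A *v axis j 1) \<union> range (\<lambda>j. - (transpose A *v axis j 1))
     \<union> (\<lambda>i. axis i 1) ` {i. fst (P i)} \<union> (\<lambda>i. - axis i 1) ` {i. snd (P i)}"
  show "finite G"
    unfolding G_def by simp
  have "G \<subseteq> kkt_cone A P"
  proof -
    have "- (transpose A *v v) \<in> kkt_cone A P" for v
      using transpose_mult_in_kkt_cone[of A "- v" P] by (simp only: linear_neg[OF matrix_vector_mul_linear])
    then show ?thesis
      unfolding G_def using transpose_mult_in_kkt_cone axis_in_sign_cone sign_cone_subset_kkt_cone
      by blast
  qed
  then have "convex_cone hull G \<subseteq> kkt_cone A P"
    by (intro hull_minimal convex_cone_kkt_cone)
  moreover have "kkt_cone A P \<subseteq> convex_cone hull G"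
  proof
    fix v
    assume "v \<in> kkt_cone A P"
    then obtain y h where v: "v = transpose A *v y + h" and h: "h \<in> sign_cone P"
      unfolding kkt_cone_def by blast
    have "transpose A *v y = (\<Sum>j\<in>UNIV. y$j *\<^sub>R (transpose A *v axis j 1))"
      by (subst (1) basis_expansion[of y, symmetric])
        (simp add: scalar_mult_eq_scaleR matrix_vector_mult_scaleR matrix_vector_right_distrib
          linear_sum[OF matrix_vector_mul_linear])
    also have "\<dots> \<in> convex_cone hull G"
      by (intro convex_cone_sum convex_cone_convex_cone_hull scaleR_mem_convex_cone_hull)
        (auto simp: G_def)
    finally have "transpose A *v y \<in> convex_cone hull G" .
    moreover have "h = (\<Sum>i\<in>UNIV. h$i *\<^sub>R axis i 1)"
      using basis_expansion[of h] by (simp add: scalar_mult_eq_scaleR)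
    moreover have "\<dots> \<in> convex_cone hull G"
      using h unfolding sign_cone_def
      by (intro convex_cone_sum convex_cone_convex_cone_hull scaleR_mem_convex_cone_hull)
        (auto simp: G_def)
    ultimately show "v \<in> convex_cone hull G"
      unfolding v by (metis convex_cone_hull_add)
  qed
  ultimately show "kkt_cone A P = convex_cone hull G"
    by blast
qed

lemma closed_kkt_cone: "closed (kkt_cone A P)"
  by (metis kkt_cone_finitely_generated closed_convex_cone_hull)

lemma primal_sol_if_kkt:
  fixes A :: "real^'n::finite^'m::finite"
  assumes z: "z \<in> boxK l u" and Az: "A *v z = b" and c: "c \<in> kkt_cone A (active_bounds l u z)"
  shows "primal_sol A b c l u z"
  unfolding primal_sol_def
proof (intro conjI z Az allI impI)
  fix w
  assume w: "w \<in> boxK l u \<and> A *v w = b"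
  obtain y h where "c = transpose A *v y + h" and h: "h \<in> sign_cone (active_bounds l u z)"
    using c unfolding kkt_cone_def by blast
  moreover have "(transpose A *v y) \<bullet> (w - z) = 0"
    using w Az by (simp only: inner_transpose_mult matrix_vector_mult_diff_distrib) simp
  moreover have "0 \<le> h \<bullet> (w - z)"
    using w h sign_cone_active_bounds_iff[OF z] by blast
  ultimately have "0 \<le> c \<bullet> (w - z)"
    by (simp add: inner_add_left)
  then show "c \<bullet> z \<le> c \<bullet> w"
    by (simp add: inner_diff_right)
qed

text \<open>Farkas: a direction separating \<open>c\<close> from the closed cone would be a feasible descent
  direction at \<open>z\<close>.\<close>
lemma kkt_if_primal_sol:
  fixes A :: "real^'n::finite^'m::finite"
  assumes "primal_sol A b c l u z"
  shows "c \<in> kkt_cone A (active_bounds l u z)"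
proof (rule ccontr)
  let ?M = "kkt_cone A (active_bounds l u z)"
  have z: "z \<in> boxK l u" and Az: "A *v z = b"
    using assms by (auto simp: primal_sol_def)
  assume "c \<notin> ?M"
  then obtain d where d: "\<And>m. m \<in> ?M \<Longrightarrow> 0 \<le> d \<bullet> m" and "d \<bullet> c < 0"
    using separate_point_convex_cone[OF convex_cone_kkt_cone closed_kkt_cone] by blast
  have "0 \<le> d \<bullet> (transpose A *v (- (A *v d)))"
    by (intro d transpose_mult_in_kkt_cone)
  then have "(A *v d) \<bullet> (A *v d) \<le> 0"
    by (simp only: inner_commute[of d] inner_transpose_mult) simp
  then have Ad: "A *v d = 0"
    by (metis inner_eq_zero_iff inner_ge_zero order_antisym)
  have "0 \<le> d $ i" if "ereal (z$i) = l i" for i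
  proof -
    have "axis i 1 \<in> ?M"
      using that sign_cone_subset_kkt_cone axis_in_sign_cone(1) by (force simp: active_bounds_def)
    then show ?thesis
      using d by (force simp: inner_axis)
  qed
  moreover have "d $ i \<le> 0" if "ereal (z$i) = u i" for i
  proof -
    have "- axis i 1 \<in> ?M"
      using that sign_cone_subset_kkt_cone axis_in_sign_cone(2) by (force simp: active_bounds_def)
    then show ?thesis
      using d by (force simp: inner_axis)
  qed
  ultimately obtain t where "t > 0" "z + t *\<^sub>R d \<in> boxK l u"
    using feasible_direction_boxK[OF z] by blast
  moreover have "A *v (z + t *\<^sub>R d) = b"
    using Az Ad by (simp add: matrix_vector_right_distrib matrix_vector_mult_scaleR)
  ultimately have "c \<bullet> z \<le> c \<bullet> (z + t *\<^sub>R d)"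
    using assms unfolding primal_sol_def by blast
  with \<open>t > 0\<close> \<open>d \<bullet> c < 0\<close> show False
    by (simp add: inner_add_right inner_commute zero_le_mult_iff)
qed

lemma primal_sol_multiplier:
  fixes A :: "real^'n::finite^'m::finite"
  assumes "primal_sol A b c l u xs"
  obtains ys where "\<forall>w\<in>boxK l u. 0 \<le> (c - transpose A *v ys) \<bullet> (w - xs)"
proof -
  obtain ys h where c: "c = transpose A *v ys + h" and h: "h \<in> sign_cone (active_bounds l u xs)"
    using kkt_if_primal_sol[OF assms] unfolding kkt_cone_def by blast
  have "xs \<in> boxK l u"
    using assms by (simp add: primal_sol_def)
  with h have "\<forall>w\<in>boxK l u. 0 \<le> h \<bullet> (w - xs)"
    using sign_cone_active_bounds_iff by blast
  then have "\<forall>w\<in>boxK l u. 0 \<le> (c - transpose A *v ys) \<bullet> (w - xs)"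
    by (simp add: c)
  then show thesis
    by (rule that)
qed

section \<open>The proximal subproblem\<close>

abbreviation prox_point :: "real^'n::finite^'m::finite \<Rightarrow> real^'n \<Rightarrow> ('n \<Rightarrow> ereal) \<Rightarrow> ('n \<Rightarrow> ereal)
    \<Rightarrow> real \<Rightarrow> real^'n \<Rightarrow> real^'m \<Rightarrow> real^'n" where
  "prox_point A c l u \<sigma> x y \<equiv> projK l u (x - \<sigma> *\<^sub>R (c - transpose A *v y))"

definition prox_lagrangian :: "real^'n::finite^'m::finite \<Rightarrow> real^'m \<Rightarrow> real^'n \<Rightarrow> real \<Rightarrow> real^'n
    \<Rightarrow> real^'m \<Rightarrow> real^'n \<Rightarrow> real" where
  "prox_lagrangian A b c \<sigma> x y z = c \<bullet> z + y \<bullet> (b - A *v z) + (1 / (2 * \<sigma>)) * (norm (z - x))\<^sup>2"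

lemma prox_lagrangian_feasible:
  "A *v z = b \<Longrightarrow> prox_lagrangian A b c \<sigma> x y z = c \<bullet> z + (1 / (2 * \<sigma>)) * (norm (z - x))\<^sup>2"
  by (simp add: prox_lagrangian_def)

lemma prox_lagrangian_add_multiplier:
  "prox_lagrangian A b c \<sigma> x (y + t *\<^sub>R d) z = prox_lagrangian A b c \<sigma> x y z + t * (d \<bullet> (b - A *v z))"
  by (simp add: prox_lagrangian_def inner_add_left)

lemma Lsig_eq_prox_lagrangian:
  "Lsig A b c l u \<sigma> y x = - prox_lagrangian A b c \<sigma> x y (prox_point A c l u \<sigma> x y)"
  by (simp add: Lsig_def prox_lagrangian_def Let_def inner_diff_left inner_diff_right
      dot_lmul_matrix inner_commute)

lemma prox_lagrangian_ge:
  fixes A :: "real^'n::finite^'m::finite"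
  assumes "\<sigma> > 0" "z \<in> boxK l u"
  shows "prox_lagrangian A b c \<sigma> x y (prox_point A c l u \<sigma> x y)
      + (1 / (2 * \<sigma>)) * (norm (z - prox_point A c l u \<sigma> x y))\<^sup>2 \<le> prox_lagrangian A b c \<sigma> x y z"
proof -
  define w where "w = c - transpose A *v y"
  define p where "p = prox_point A c l u \<sigma> x y"
  have L: "prox_lagrangian A b c \<sigma> x y v = y \<bullet> b + w \<bullet> v + (1 / (2 * \<sigma>)) * (norm (v - x))\<^sup>2" for v
    by (simp add: prox_lagrangian_def w_def inner_diff_left inner_diff_right dot_lmul_matrix)
  have "(x - \<sigma> *\<^sub>R w - p) \<bullet> (z - p) \<le> 0"
    unfolding p_def w_def by (rule projK_inner_le[OF assms(2)])
  moreover have "(x - \<sigma> *\<^sub>R w - p) \<bullet> (z - p) = - (\<sigma> * (w \<bullet> (z - p)) + (z - p) \<bullet> (p - x))"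
    by (simp add: inner_diff_left inner_diff_right inner_commute)
  ultimately have gap_nonneg: "0 \<le> (\<sigma> * (w \<bullet> (z - p)) + (z - p) \<bullet> (p - x)) / \<sigma>"
    using assms(1) by simp
  have "(norm (z - x))\<^sup>2 = (norm (z - p))\<^sup>2 + (norm (p - x))\<^sup>2 + 2 * ((z - p) \<bullet> (p - x))"
    using dot_norm[of "z - p" "p - x"] by simp
  then have "prox_lagrangian A b c \<sigma> x y z - (prox_lagrangian A b c \<sigma> x y p + (1 / (2 * \<sigma>)) * (norm (z - p))\<^sup>2)
      = (\<sigma> * (w \<bullet> (z - p)) + (z - p) \<bullet> (p - x)) / \<sigma>"
    using assms(1) unfolding L inner_diff_right[of w z p] by (simp add: field_simps)
  with gap_nonneg show ?thesis
    unfolding p_def by linarith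
qed

lemma mult_le_sq_div_add_sq:
  fixes a \<delta> \<sigma> :: real
  assumes "\<sigma> > 0"
  shows "a * \<delta> \<le> \<delta>\<^sup>2 / (2 * \<sigma>) + \<sigma> * a\<^sup>2 / 2"
proof -
  have "0 \<le> (\<delta> - \<sigma> * a)\<^sup>2 / (2 * \<sigma>)"
    using assms by simp
  also have "\<dots> = \<delta>\<^sup>2 / (2 * \<sigma>) + \<sigma> * a\<^sup>2 / 2 - a * \<delta>"
    using assms by (simp add: field_simps power2_eq_square)
  finally show ?thesis
    by simp
qed

lemma le_zero_if_le_mult_pos:
  fixes D K :: real
  assumes "\<And>t. 0 < t \<Longrightarrow> D \<le> t * K"
  shows "D \<le> 0"
proof -
  have "((\<lambda>t. t * K) \<longlongrightarrow> 0 * K) (at_right 0)"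
    by (intro tendsto_intros)
  moreover have "eventually (\<lambda>t. D \<le> t * K) (at_right 0)"
    using eventually_at_right_less by (rule eventually_mono) (rule assms)
  ultimately show ?thesis
    using tendsto_lowerbound by fastforce
qed

text \<open>The projection is not differentiated: if \<open>d = b - A p \<noteq> 0\<close>, moving the multiplier to
  \<open>y + t d\<close> would decrease \<open>L\<^sub>\<sigma>\<close> by at least \<open>t \<parallel>d\<parallel>\<^sup>2 - O(t\<^sup>2)\<close>.\<close>
lemma Lsig_minimizer_feasible:
  fixes A :: "real^'n::finite^'m::finite"
  assumes \<sigma>: "\<sigma> > 0" and ne: "boxK l u \<noteq> {}"
    and min: "\<And>y'. Lsig A b c l u \<sigma> y x \<le> Lsig A b c l u \<sigma> y' x"
  shows "A *v prox_point A c l u \<sigma> x y = b"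
proof -
  define p where "p = prox_point A c l u \<sigma> x y"
  define d where "d = b - A *v p"
  define a where "a = norm (transpose A *v d)"
  have decrease: "(norm d)\<^sup>2 \<le> t * (\<sigma> * a\<^sup>2 / 2)" if "t > 0" for t
  proof -
    define pt where "pt = prox_point A c l u \<sigma> x (y + t *\<^sub>R d)"
    define \<delta> where "\<delta> = norm (pt - p)"
    have "prox_lagrangian A b c \<sigma> x y pt + t * (d \<bullet> (b - A *v pt)) \<le> prox_lagrangian A b c \<sigma> x y p"
      using min[of "y + t *\<^sub>R d"]
      by (simp add: Lsig_eq_prox_lagrangian prox_lagrangian_add_multiplier pt_def p_def)
    moreover have "prox_lagrangian A b c \<sigma> x y p + (1 / (2 * \<sigma>)) * \<delta>\<^sup>2 \<le> prox_lagrangian A b c \<sigma> x y pt"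
      unfolding p_def \<delta>_def
      by (rule prox_lagrangian_ge[OF \<sigma>]) (simp add: pt_def projK_in_boxK[OF ne])
    moreover have "(norm d)\<^sup>2 - a * \<delta> \<le> d \<bullet> (b - A *v pt)"
    proof -
      have "b - A *v pt = d + A *v (p - pt)"
        by (simp add: d_def matrix_vector_mult_diff_distrib)
      then have "d \<bullet> (b - A *v pt) = (norm d)\<^sup>2 + (transpose A *v d) \<bullet> (p - pt)"
        by (simp only: inner_add_right inner_transpose_mult power2_norm_eq_inner)
      also have "\<dots> = (norm d)\<^sup>2 - (transpose A *v d) \<bullet> (pt - p)"
        by (simp add: inner_diff_right)
      moreover have "(transpose A *v d) \<bullet> (pt - p) \<le> a * \<delta>"
        unfolding a_def \<delta>_def by (rule norm_cauchy_schwarz)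
      ultimately show ?thesis by simp
    qed
    then have "t * ((norm d)\<^sup>2 - a * \<delta>) \<le> t * (d \<bullet> (b - A *v pt))"
      using \<open>t > 0\<close> by simp
    ultimately have "\<delta>\<^sup>2 / (2 * \<sigma>) + t * ((norm d)\<^sup>2 - a * \<delta>) \<le> 0"
      by (simp add: field_simps)
    moreover have "(t * a) * \<delta> \<le> \<delta>\<^sup>2 / (2 * \<sigma>) + \<sigma> * (t * a)\<^sup>2 / 2"
      by (rule mult_le_sq_div_add_sq[OF \<sigma>])
    ultimately have "t * (norm d)\<^sup>2 \<le> t * (t * (\<sigma> * a\<^sup>2 / 2))"
      by (simp add: algebra_simps power2_eq_square)
    then show ?thesis
      using \<open>t > 0\<close> by simp
  qed
  then have "(norm d)\<^sup>2 \<le> 0"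
    by (rule le_zero_if_le_mult_pos)
  then show ?thesis
    by (simp add: d_def p_def)
qed
lemma prox_point_optimal:
  fixes A :: "real^'n::finite^'m::finite"
  assumes "\<sigma> > 0" "A *v prox_point A c l u \<sigma> x y = b" "z \<in> boxK l u" "A *v z = b"
  shows "c \<bullet> prox_point A c l u \<sigma> x y + (1 / (2 * \<sigma>)) * (norm (prox_point A c l u \<sigma> x y - x))\<^sup>2
      + (1 / (2 * \<sigma>)) * (norm (z - prox_point A c l u \<sigma> x y))\<^sup>2
    \<le> c \<bullet> z + (1 / (2 * \<sigma>)) * (norm (z - x))\<^sup>2"
  using prox_lagrangian_ge[OF assms(1,3), where A=A and c=c and x=x and y=y and b=b]
  unfolding prox_lagrangian_feasible[OF assms(2)] prox_lagrangian_feasible[OF assms(4)] .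

lemma prox_point_normal:
  fixes A :: "real^'n::finite^'m::finite"
  assumes "\<sigma> > 0" "z \<in> boxK l u"
  shows "0 \<le> (c - transpose A *v y + (1 / \<sigma>) *\<^sub>R (prox_point A c l u \<sigma> x y - x))
      \<bullet> (z - prox_point A c l u \<sigma> x y)"
proof -
  let ?p = "prox_point A c l u \<sigma> x y"
  have "x - \<sigma> *\<^sub>R (c - transpose A *v y) - ?p = - \<sigma> *\<^sub>R (c - transpose A *v y + (1 / \<sigma>) *\<^sub>R (?p - x))"
    using assms(1) by (simp add: algebra_simps)
  then show ?thesis
    using projK_inner_le[OF assms(2), of "x - \<sigma> *\<^sub>R (c - transpose A *v y)"] assms(1)
    by (simp add: zero_le_mult_iff)
qed

lemma prox_subproblem_unique_solution:
  fixes A :: "real^'n::finite^'m::finite"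
  assumes \<sigma>: "\<sigma> > 0" and ne: "boxK l u \<noteq> {}"
    and min: "\<And>y'. Lsig A b c l u \<sigma> y x \<le> Lsig A b c l u \<sigma> y' x"
  shows "{z. z \<in> boxK l u \<and> A *v z = b \<and>
            (\<forall>z'. z' \<in> boxK l u \<and> A *v z' = b \<longrightarrow>
               c \<bullet> z + (1 / (2 * \<sigma>)) * (norm (z - x))\<^sup>2 \<le> c \<bullet> z' + (1 / (2 * \<sigma>)) * (norm (z' - x))\<^sup>2)}
       = {prox_point A c l u \<sigma> x y}"
proof -
  let ?p = "prox_point A c l u \<sigma> x y"
  have Ap: "A *v ?p = b"
    using Lsig_minimizer_feasible[OF \<sigma> ne min] .
  have opt: "c \<bullet> ?p + (1 / (2 * \<sigma>)) * (norm (?p - x))\<^sup>2 + (1 / (2 * \<sigma>)) * (norm (z - ?p))\<^sup>2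
      \<le> c \<bullet> z + (1 / (2 * \<sigma>)) * (norm (z - x))\<^sup>2" if "z \<in> boxK l u" "A *v z = b" for z
    using prox_point_optimal[OF \<sigma> Ap that] .
  have gap_nonneg: "0 \<le> (1 / (2 * \<sigma>)) * (norm v)\<^sup>2" for v :: "real^'n"
    using \<sigma> by simp
  have "z = ?p" if "z \<in> boxK l u" "A *v z = b"
    and "c \<bullet> z + (1 / (2 * \<sigma>)) * (norm (z - x))\<^sup>2 \<le> c \<bullet> ?p + (1 / (2 * \<sigma>)) * (norm (?p - x))\<^sup>2" for z
  proof -
    have "(1 / (2 * \<sigma>)) * (norm (z - ?p))\<^sup>2 \<le> 0"
      using opt[OF that(1,2)] that(3) by linarith
    then have "(norm (z - ?p))\<^sup>2 \<le> 0"
      using \<sigma> by (simp add: divide_le_0_iff)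
    then show ?thesis
      by simp
  qed
  moreover have "?p \<in> boxK l u"
    using projK_in_boxK[OF ne] .
  moreover have "c \<bullet> ?p + (1 / (2 * \<sigma>)) * (norm (?p - x))\<^sup>2 \<le> c \<bullet> z + (1 / (2 * \<sigma>)) * (norm (z - x))\<^sup>2"
    if "z \<in> boxK l u" "A *v z = b" for z
    using opt[OF that] gap_nonneg[of "z - ?p"] by linarith
  ultimately show ?thesis
    using Ap by blast
qed

lemma dual_obj_le_primal:
  fixes A :: "real^'n::finite^'m::finite"
  assumes "x \<in> boxK l u" "A *v x = b"
  shows "dual_obj A b c l u y \<le> ereal (c \<bullet> x)"
proof -
  have "ereal ((transpose A *v y - c) \<bullet> x) \<le> supp_fun (boxK l u) (transpose A *v y - c)"
    unfolding supp_fun_def using assms(1) by (rule SUP_upper)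
  moreover have "(transpose A *v y - c) \<bullet> x = b \<bullet> y - c \<bullet> x"
    using assms(2) by (simp only: inner_diff_left inner_transpose_mult inner_commute[of y])
  ultimately have "ereal (b \<bullet> y) - supp_fun (boxK l u) (transpose A *v y - c)
      \<le> ereal (b \<bullet> y) - ereal (b \<bullet> y - c \<bullet> x)"
    by (intro ereal_minus_mono) auto
  then show ?thesis
    by (simp add: dual_obj_def)
qed

lemma dual_sol_if_normal:
  fixes A :: "real^'n::finite^'m::finite"
  assumes x: "x \<in> boxK l u" and Ax: "A *v x = b"
    and normal: "\<forall>z\<in>boxK l u. 0 \<le> (c - transpose A *v y) \<bullet> (z - x)"
  shows "dual_sol A b c l u y"
proof -
  have "(transpose A *v y - c) \<bullet> z \<le> (transpose A *v y - c) \<bullet> x" if "z \<in> boxK l u" for z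
  proof -
    have "0 \<le> (c - transpose A *v y) \<bullet> (z - x)"
      using normal that by blast
    then show ?thesis
      by (simp add: inner_diff_left inner_diff_right)
  qed
  then have "supp_fun (boxK l u) (transpose A *v y - c) = ereal ((transpose A *v y - c) \<bullet> x)"
    unfolding supp_fun_def by (intro antisym SUP_least SUP_upper x) simp
  moreover have "(transpose A *v y - c) \<bullet> x = b \<bullet> y - c \<bullet> x"
    using Ax by (simp only: inner_diff_left inner_transpose_mult inner_commute[of y])
  ultimately have "dual_obj A b c l u y = ereal (c \<bullet> x)"
    by (simp add: dual_obj_def)
  then show ?thesis
    using dual_obj_le_primal[OF x Ax] by (simp add: dual_sol_def)
qed

lemma Lsig_minimizer_dual_sol:
  fixes A :: "real^'n::finite^'m::finite"
  assumes \<sigma>: "\<sigma> > 0" and x: "primal_sol A b c l u x"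
    and min: "\<And>y'. Lsig A b c l u \<sigma> y x \<le> Lsig A b c l u \<sigma> y' x"
  shows "dual_sol A b c l u y"
proof -
  let ?p = "prox_point A c l u \<sigma> x y"
  have xK: "x \<in> boxK l u" and Ax: "A *v x = b"
    using x by (auto simp: primal_sol_def)
  then have ne: "boxK l u \<noteq> {}"
    by blast
  have Ap: "A *v ?p = b"
    using Lsig_minimizer_feasible[OF \<sigma> ne min] .
  have "c \<bullet> x \<le> c \<bullet> ?p"
    using x projK_in_boxK[OF ne] Ap by (simp add: primal_sol_def)
  moreover have "0 \<le> (1 / (2 * \<sigma>)) * (norm (?p - x))\<^sup>2"
    using \<sigma> by simp
  ultimately have "(1 / (2 * \<sigma>)) * (norm (x - ?p))\<^sup>2 \<le> 0"
    using prox_point_optimal[OF \<sigma> Ap xK Ax] by simp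
  then have "(norm (x - ?p))\<^sup>2 \<le> 0"
    using \<sigma> by (simp add: divide_le_0_iff)
  then have "?p = x"
    by simp
  then have "\<forall>z\<in>boxK l u. 0 \<le> (c - transpose A *v y) \<bullet> (z - x)"
    using prox_point_normal[OF \<sigma>, where A=A and c=c and x=x and y=y and l=l and u=u] by simp
  then show ?thesis
    by (rule dual_sol_if_normal[OF xK Ax])
qed

section \<open>Boundedness of the Snipal iterates\<close>

lemma snipal_step_inner_le:
  fixes A :: "real^'n::finite^'m::finite"
  assumes \<sigma>: "\<sigma> > 0" and xs: "xs \<in> boxK l u" "A *v xs = b"
    and saddle: "\<forall>w\<in>boxK l u. 0 \<le> (c - transpose A *v ys) \<bullet> (w - xs)"
    and xn: "xn = prox_point A c l u \<sigma> x yn"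
  shows "(x - xn) \<bullet> (xs - xn)
    \<le> \<tau> * ((ys - yn) \<bullet> (yn - y)) + \<sigma> * ((yn - ys) \<bullet> grad_psi A b c l u \<sigma> \<tau> x y yn)"
proof -
  define g where "g = grad_psi A b c l u \<sigma> \<tau> x y yn"
  define W where "W = c - transpose A *v yn"
  have xnK: "xn \<in> boxK l u"
    unfolding xn using projK_in_boxK xs(1) by blast
  have "x + \<sigma> *\<^sub>R (transpose A *v yn - c) = x - \<sigma> *\<^sub>R W"
    unfolding W_def by (simp add: algebra_simps)
  then have residual: "b - A *v xn = (\<tau> / \<sigma>) *\<^sub>R (yn - y) - g"
    unfolding g_def grad_psi_def xn W_def by (simp add: algebra_simps)
  have "(x - \<sigma> *\<^sub>R W - xn) \<bullet> (xs - xn) \<le> 0"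
    unfolding xn W_def by (rule projK_inner_le[OF xs(1)])
  then have proj: "(x - xn) \<bullet> (xs - xn) \<le> \<sigma> * (W \<bullet> (xs - xn))"
    by (simp add: inner_diff_left)
  have "W \<bullet> (xs - xn) = (c - transpose A *v ys) \<bullet> (xs - xn) + (ys - yn) \<bullet> (A *v (xs - xn))"
    unfolding W_def by (simp only: inner_diff_left inner_transpose_mult)
  moreover have "0 \<le> (c - transpose A *v ys) \<bullet> (xn - xs)"
    using saddle xnK by blast
  moreover have "A *v (xs - xn) = b - A *v xn"
    using xs(2) by (simp add: matrix_vector_mult_diff_distrib)
  ultimately have "W \<bullet> (xs - xn) \<le> (ys - yn) \<bullet> (b - A *v xn)"
    by (simp add: inner_diff_right)
  also have "\<dots> = (\<tau> / \<sigma>) * ((ys - yn) \<bullet> (yn - y)) + (yn - ys) \<bullet> g"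
    unfolding residual by (simp add: inner_diff_right inner_diff_left)
  finally have "\<sigma> * (W \<bullet> (xs - xn)) \<le> \<sigma> * ((\<tau> / \<sigma>) * ((ys - yn) \<bullet> (yn - y)) + (yn - ys) \<bullet> g)"
    using \<sigma> by simp
  also have "\<dots> = \<tau> * ((ys - yn) \<bullet> (yn - y)) + \<sigma> * ((yn - ys) \<bullet> g)"
    using \<sigma> by (simp add: algebra_simps)
  finally show ?thesis
    using proj unfolding g_def by linarith
qed

lemma snipal_step_inequality:
  fixes A :: "real^'n::finite^'m::finite"
  assumes \<sigma>: "\<sigma> > 0" and \<tau>: "\<tau> \<ge> 0" and xs: "xs \<in> boxK l u" "A *v xs = b"
    and saddle: "\<forall>w\<in>boxK l u. 0 \<le> (c - transpose A *v ys) \<bullet> (w - xs)"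
    and xn: "xn = prox_point A c l u \<sigma> x yn"
  shows "(norm (xn - xs))\<^sup>2 + \<tau> * (norm (yn - ys))\<^sup>2
    \<le> (norm (x - xs))\<^sup>2 + \<tau> * (norm (y - ys))\<^sup>2 + 2 * \<sigma> * ((yn - ys) \<bullet> grad_psi A b c l u \<sigma> \<tau> x y yn)"
proof -
  define g where "g = grad_psi A b c l u \<sigma> \<tau> x y yn"
  have "(x - xn) \<bullet> (xs - xn) \<le> \<tau> * ((ys - yn) \<bullet> (yn - y)) + \<sigma> * ((yn - ys) \<bullet> g)"
    unfolding g_def by (rule snipal_step_inner_le[OF \<sigma> xs saddle xn])
  moreover have "2 * ((x - xn) \<bullet> (xs - xn)) = (norm (x - xn))\<^sup>2 + (norm (xs - xn))\<^sup>2 - (norm (x - xs))\<^sup>2"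
    using dot_norm_neg[of "x - xn" "xs - xn"] by simp
  moreover have "2 * ((ys - yn) \<bullet> (yn - y)) = (norm (ys - y))\<^sup>2 - (norm (ys - yn))\<^sup>2 - (norm (yn - y))\<^sup>2"
    using dot_norm[of "ys - yn" "yn - y"] by simp
  then have "2 * (\<tau> * ((ys - yn) \<bullet> (yn - y)))
      = \<tau> * (norm (y - ys))\<^sup>2 - \<tau> * (norm (yn - ys))\<^sup>2 - \<tau> * (norm (yn - y))\<^sup>2"
    by (simp only: norm_minus_commute[of ys] mult.left_commute[of 2] flip: right_diff_distrib)
  moreover have "0 \<le> \<tau> * (norm (yn - y))\<^sup>2"
    using \<tau> by simp
  moreover have "2 * \<sigma> * ((yn - ys) \<bullet> g) = 2 * (\<sigma> * ((yn - ys) \<bullet> g))"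
    by simp
  ultimately show ?thesis
    unfolding g_def norm_minus_commute[of xs xn] using zero_le_power2[of "norm (x - xn)"] by linarith
qed

lemma le_add_twice_if_sq_le:
  fixes R r e :: real
  assumes "0 \<le> R" "0 \<le> r" "0 \<le> e" "R\<^sup>2 \<le> r\<^sup>2 + 2 * e * R"
  shows "R \<le> r + 2 * e"
proof -
  have "(R - e)\<^sup>2 = R\<^sup>2 - 2 * e * R + e\<^sup>2" "(r + e)\<^sup>2 = r\<^sup>2 + 2 * (r * e) + e\<^sup>2"
    by (simp_all add: power2_eq_square algebra_simps)
  then have "(R - e)\<^sup>2 \<le> (r + e)\<^sup>2"
    using assms mult_nonneg_nonneg[of r e] by linarith
  then have "R - e \<le> r + e"
    using power2_le_imp_le add_nonneg_nonneg[OF assms(2,3)] by blast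
  then show ?thesis
    by simp
qed

lemma snipal_step_fejer:
  fixes A :: "real^'n::finite^'m::finite"
  assumes \<sigma>: "\<sigma> > 0" and \<tau>: "\<tau> > 0" "0 \<le> \<tau>'" "\<tau>' \<le> \<tau>" and \<epsilon>: "\<epsilon> \<ge> 0"
    and xs: "xs \<in> boxK l u" "A *v xs = b"
    and saddle: "\<forall>w\<in>boxK l u. 0 \<le> (c - transpose A *v ys) \<bullet> (w - xs)"
    and xn: "xn = prox_point A c l u \<sigma> x yn"
    and stop: "norm (grad_psi A b c l u \<sigma> \<tau> x y yn) \<le> min (sqrt \<tau>) 1 / \<sigma> * \<epsilon>"
  shows "sqrt ((norm (xn - xs))\<^sup>2 + \<tau>' * (norm (yn - ys))\<^sup>2)
    \<le> sqrt ((norm (x - xs))\<^sup>2 + \<tau> * (norm (y - ys))\<^sup>2) + 2 * \<epsilon>"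
proof -
  define g where "g = grad_psi A b c l u \<sigma> \<tau> x y yn"
  define R where "R = sqrt ((norm (xn - xs))\<^sup>2 + \<tau> * (norm (yn - ys))\<^sup>2)"
  define r where "r = sqrt ((norm (x - xs))\<^sup>2 + \<tau> * (norm (y - ys))\<^sup>2)"
  have "\<sigma> * norm g \<le> sqrt \<tau> * \<epsilon>"
  proof -
    have "norm g \<le> sqrt \<tau> / \<sigma> * \<epsilon>"
      using stop \<sigma> \<epsilon> unfolding g_def
      by (smt (verit) divide_right_mono min.cobounded1 mult_right_mono)
    then show ?thesis
      using \<sigma> by (simp add: field_simps)
  qed
  moreover have "sqrt \<tau> * norm (yn - ys) = sqrt (\<tau> * (norm (yn - ys))\<^sup>2)"
    by (simp add: real_sqrt_mult)
  then have "sqrt \<tau> * norm (yn - ys) \<le> R"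
    unfolding R_def by (simp add: real_sqrt_le_mono)
  ultimately have "\<sigma> * ((yn - ys) \<bullet> g) \<le> \<epsilon> * R"
    using \<sigma> \<epsilon> norm_cauchy_schwarz[of "yn - ys" g]
    by (smt (verit) mult_left_mono mult_right_mono mult.commute mult.assoc norm_ge_zero)
  moreover have "(norm (xn - xs))\<^sup>2 + \<tau> * (norm (yn - ys))\<^sup>2
      \<le> (norm (x - xs))\<^sup>2 + \<tau> * (norm (y - ys))\<^sup>2 + 2 * \<sigma> * ((yn - ys) \<bullet> g)"
    unfolding g_def using snipal_step_inequality[OF \<sigma> _ xs saddle xn] \<tau>(1) by simp
  ultimately have "R\<^sup>2 \<le> r\<^sup>2 + 2 * \<epsilon> * R"
    unfolding R_def r_def using \<tau>(1) by simp
  moreover have "0 \<le> R" "0 \<le> r"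
    unfolding R_def r_def using \<tau>(1) by simp_all
  ultimately have "R \<le> r + 2 * \<epsilon>"
    using le_add_twice_if_sq_le \<epsilon> by blast
  moreover have "sqrt ((norm (xn - xs))\<^sup>2 + \<tau>' * (norm (yn - ys))\<^sup>2) \<le> R"
    unfolding R_def using \<tau> by (intro real_sqrt_le_mono add_left_mono mult_right_mono) auto
  ultimately show ?thesis
    unfolding r_def by linarith
qed

lemma snipal_iterates_bounded:
  fixes A :: "real^'n::finite^'m::finite"
  assumes \<sigma>: "\<And>k. \<sigma> k > 0" and \<tau>: "\<And>k. \<tau> k > 0" "decseq \<tau>"
    and \<epsilon>: "\<And>k. \<epsilon> k \<ge> 0" "summable \<epsilon>"
    and xs: "xs \<in> boxK l u" "A *v xs = b"
    and saddle: "\<forall>w\<in>boxK l u. 0 \<le> (c - transpose A *v ys) \<bullet> (w - xs)"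
    and x_update: "\<And>k. x (Suc k) = prox_point A c l u (\<sigma> k) (x k) (y (Suc k))"
    and stop: "\<And>k. norm (grad_psi A b c l u (\<sigma> k) (\<tau> k) (x k) (y k) (y (Suc k)))
                  \<le> min (sqrt (\<tau> k)) 1 / \<sigma> k * \<epsilon> k"
  obtains B where "\<And>k. norm (x k - xs) \<le> B"
proof -
  define r where "r k = sqrt ((norm (x k - xs))\<^sup>2 + \<tau> k * (norm (y k - ys))\<^sup>2)" for k
  have step: "r (Suc k) \<le> r k + 2 * \<epsilon> k" for k
    unfolding r_def
    using \<tau>(1)[of "Suc k"] decseqD[OF \<tau>(2), of k "Suc k"]
    by (intro snipal_step_fejer[OF \<sigma>[of k] \<tau>(1)[of k] _ _ \<epsilon>(1)[of k] xs saddle x_update[of k] stop[of k]])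
      auto
  have partial_sums: "r k \<le> r 0 + 2 * (\<Sum>i<k. \<epsilon> i)" for k
  proof (induction k)
    case (Suc k)
    then show ?case using step[of k] by simp
  qed simp
  have "norm (x k - xs) \<le> r 0 + 2 * suminf \<epsilon>" for k
  proof -
    have "norm (x k - xs) \<le> r k"
      unfolding r_def using \<tau>(1)[of k] by (intro real_le_rsqrt) simp
    moreover have "(\<Sum>i<k. \<epsilon> i) \<le> suminf \<epsilon>"
      using \<epsilon> by (intro sum_le_suminf) auto
    ultimately show ?thesis
      using partial_sums[of k] by linarith
  qed
  then show thesis
    by (rule that)
qed

section \<open>Exact proximal steps with large \<open>\<sigma>\<close>\<close>

lemma finite_family_closed_gap:
  fixes S :: "'p::finite \<Rightarrow> 'a::metric_space set"
  assumes "\<And>P. closed (S P)"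
  obtains \<delta> where "\<delta> > 0" "\<And>P m. m \<in> S P \<Longrightarrow> dist m c < \<delta> \<Longrightarrow> c \<in> S P"
proof -
  have "eventually (\<lambda>m. m \<in> S P \<longrightarrow> c \<in> S P) (nhds c)" for P
  proof (cases "c \<in> S P")
    case False
    then have "eventually (\<lambda>m. m \<in> - S P) (nhds c)"
      using assms by (intro eventually_nhds_in_open) auto
    then show ?thesis
      by (rule eventually_mono) simp
  qed simp
  then have "eventually (\<lambda>m. \<forall>P. m \<in> S P \<longrightarrow> c \<in> S P) (nhds c)"
    by (rule eventually_all_finite)
  then show thesis
    using that unfolding eventually_nhds_metric by blast
qed

lemma prox_point_dist_le:
  fixes A :: "real^'n::finite^'m::finite"
  assumes \<sigma>: "\<sigma> > 0" and xs: "primal_sol A b c l u xs"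
    and Ap: "A *v prox_point A c l u \<sigma> x y = b"
  shows "norm (prox_point A c l u \<sigma> x y - x) \<le> norm (xs - x)"
proof -
  let ?p = "prox_point A c l u \<sigma> x y"
  have xsK: "xs \<in> boxK l u" and Axs: "A *v xs = b"
    using xs by (auto simp: primal_sol_def)
  then have "c \<bullet> xs \<le> c \<bullet> ?p"
    using xs projK_in_boxK[of l u] Ap by (auto simp: primal_sol_def)
  moreover have "0 \<le> (1 / (2 * \<sigma>)) * (norm (xs - ?p))\<^sup>2"
    using \<sigma> by simp
  ultimately have "(1 / (2 * \<sigma>)) * (norm (?p - x))\<^sup>2 \<le> (1 / (2 * \<sigma>)) * (norm (xs - x))\<^sup>2"
    using prox_point_optimal[OF \<sigma> Ap xsK Axs] by linarith
  then have "(norm (?p - x))\<^sup>2 \<le> (norm (xs - x))\<^sup>2"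
    by (rule mult_left_le_imp_le) (use \<sigma> in simp)
  then show ?thesis
    by (rule power2_le_imp_le) simp
qed

lemma prox_point_near_kkt_cone:
  fixes A :: "real^'n::finite^'m::finite"
  assumes \<sigma>: "\<sigma> > 0" and pK: "prox_point A c l u \<sigma> x y \<in> boxK l u"
  obtains m where "m \<in> kkt_cone A (active_bounds l u (prox_point A c l u \<sigma> x y))"
    "dist m c = norm (prox_point A c l u \<sigma> x y - x) / \<sigma>"
proof
  let ?p = "prox_point A c l u \<sigma> x y"
  define g where "g = c - transpose A *v y + (1 / \<sigma>) *\<^sub>R (?p - x)"
  have "g \<in> sign_cone (active_bounds l u ?p)"
    unfolding g_def sign_cone_active_bounds_iff[OF pK]
    using prox_point_normal[OF \<sigma>] by blast
  then show "transpose A *v y + g \<in> kkt_cone A (active_bounds l u ?p)"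
    unfolding kkt_cone_def by blast
  show "dist (transpose A *v y + g) c = norm (?p - x) / \<sigma>"
    using \<sigma> by (simp add: g_def dist_norm)
qed

lemma prox_point_primal_sol_if_sigma_large:
  fixes A :: "real^'n::finite^'m::finite"
  assumes xs: "primal_sol A b c l u xs"
  obtains \<sigma>bar where "\<sigma>bar > 0"
    "\<And>\<sigma> x y. \<sigma>bar \<le> \<sigma> \<Longrightarrow> norm (x - xs) \<le> B
      \<Longrightarrow> (\<And>y'. Lsig A b c l u \<sigma> y x \<le> Lsig A b c l u \<sigma> y' x)
      \<Longrightarrow> primal_sol A b c l u (prox_point A c l u \<sigma> x y)"
proof -
  obtain \<delta> where \<delta>: "\<delta> > 0"
    and gap: "\<And>P m. m \<in> kkt_cone A P \<Longrightarrow> dist m c < \<delta> \<Longrightarrow> c \<in> kkt_cone A P"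
    using finite_family_closed_gap[of "kkt_cone A" c] closed_kkt_cone by blast
  have ne: "boxK l u \<noteq> {}"
    using xs by (auto simp: primal_sol_def)
  define \<sigma>bar where "\<sigma>bar = \<bar>B\<bar> / \<delta> + 1"
  have "\<sigma>bar > 0"
    unfolding \<sigma>bar_def using \<delta> by (simp add: add_nonneg_pos)
  moreover have "primal_sol A b c l u (prox_point A c l u \<sigma> x y)"
    if \<sigma>: "\<sigma>bar \<le> \<sigma>" and x: "norm (x - xs) \<le> B"
      and min: "\<And>y'. Lsig A b c l u \<sigma> y x \<le> Lsig A b c l u \<sigma> y' x" for \<sigma> x y
  proof -
    let ?p = "prox_point A c l u \<sigma> x y"
    have \<sigma>_pos: "\<sigma> > 0"
      using \<sigma> \<open>\<sigma>bar > 0\<close> by linarith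
    have pK: "?p \<in> boxK l u" and Ap: "A *v ?p = b"
      using projK_in_boxK[OF ne] Lsig_minimizer_feasible[OF \<sigma>_pos ne min] by auto
    have "norm (?p - x) \<le> \<bar>B\<bar>"
      using prox_point_dist_le[OF \<sigma>_pos xs Ap] x by (simp add: norm_minus_commute)
    then have "norm (?p - x) / \<sigma> \<le> \<bar>B\<bar> / \<sigma>bar"
      using \<sigma> \<open>\<sigma>bar > 0\<close> by (intro frac_le) auto
    also have "\<dots> < \<delta>"
      unfolding \<sigma>bar_def using \<delta> by (simp add: divide_less_eq field_simps)
    finally have "norm (?p - x) / \<sigma> < \<delta>" .
    with prox_point_near_kkt_cone[OF \<sigma>_pos pK] have "c \<in> kkt_cone A (active_bounds l u ?p)"
      by (metis gap)
    then show ?thesis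
      by (rule primal_sol_if_kkt[OF pK Ap])
  qed
  ultimately show thesis
    using that by blast
qed

theorem mainTheorem11:
  fixes A :: "real^'n^'m" and b :: "real^'m" and c :: "real^'n"
    and l u :: "'n \<Rightarrow> ereal"
    and x :: "nat \<Rightarrow> real^'n" and y :: "nat \<Rightarrow> real^'m"
    and \<sigma> \<tau> \<epsilon> :: "nat \<Rightarrow> real" and \<tau>inf :: real
    and ybar :: "nat \<Rightarrow> real^'m"
  assumes l_fin: "\<forall>i. l i \<noteq> \<infinity>" and u_fin: "\<forall>i. u i \<noteq> -\<infinity>"
    and P_solvable: "\<exists>xs. primal_sol A b c l u xs"
    and D_solvable: "\<exists>ys. dual_sol A b c l u ys"
    and full_row_rank: "rank A = CARD('m)"
    and sigma_pos: "\<sigma> 0 > 0" and sigma_mono: "incseq \<sigma>"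
    and tau_pos: "\<forall>k. \<tau> k > 0" and tau_dec: "decseq \<tau>"
    and tau_lim: "\<tau> \<longlonglongrightarrow> \<tau>inf" and tau_inf_pos: "\<tau>inf > 0"
    and x_update: "\<forall>k. x (Suc k) = projK l u (x k - \<sigma> k *\<^sub>R (c - transpose A *v y (Suc k)))"
    and stop_A': "\<forall>k. norm (grad_psi A b c l u (\<sigma> k) (\<tau> k) (x k) (y k) (y (Suc k)))
                     \<le> min (sqrt (\<tau> k)) 1 / \<sigma> k * \<epsilon> k"
    and eps_nonneg: "\<forall>k. \<epsilon> k \<ge> 0" and eps_summable: "summable \<epsilon>"
    and ybar_min: "\<forall>k. \<forall>y'. Lsig A b c l u (\<sigma> k) (ybar (Suc k)) (x k) \<le> Lsig A b c l u (\<sigma> k) y' (x k)"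
  shows "(\<forall>k. {z. z \<in> boxK l u \<and> A *v z = b \<and>
                 (\<forall>z'. z' \<in> boxK l u \<and> A *v z' = b \<longrightarrow>
                    c \<bullet> z + (1 / (2 * \<sigma> k)) * (norm (z - x k))\<^sup>2 \<le> c \<bullet> z' + (1 / (2 * \<sigma> k)) * (norm (z' - x k))\<^sup>2)}
               = {projK l u (x k - \<sigma> k *\<^sub>R (c - transpose A *v ybar (Suc k)))})
       \<and> (\<exists>\<sigma>bar > 0. \<forall>k. \<sigma> k \<ge> \<sigma>bar \<longrightarrow>
             primal_sol A b c l u (projK l u (x k - \<sigma> k *\<^sub>R (c - transpose A *v ybar (Suc k)))))
       \<and> (\<forall>k. primal_sol A b c l u (x k) \<longrightarrow> dual_sol A b c l u (ybar (Suc k)))"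
proof -
  have \<sigma>: "\<And>k. \<sigma> k > 0"
    using sigma_pos incseqD[OF sigma_mono, of 0] by (meson le0 less_le_trans)
  have min: "\<And>k y'. Lsig A b c l u (\<sigma> k) (ybar (Suc k)) (x k) \<le> Lsig A b c l u (\<sigma> k) y' (x k)"
    using ybar_min by blast
  obtain xs where xs: "primal_sol A b c l u xs"
    using P_solvable by blast
  then have xsK: "xs \<in> boxK l u" and Axs: "A *v xs = b"
    by (auto simp: primal_sol_def)
  then have ne: "boxK l u \<noteq> {}"
    by blast
  obtain ys where saddle: "\<forall>w\<in>boxK l u. 0 \<le> (c - transpose A *v ys) \<bullet> (w - xs)"
    using primal_sol_multiplier[OF xs] .
  obtain B where bounded: "\<And>k. norm (x k - xs) \<le> B"
    using snipal_iterates_bounded[OF \<sigma> tau_pos[rule_format] tau_dec eps_nonneg[rule_format] eps_summable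
        xsK Axs saddle x_update[rule_format] stop_A'[rule_format]] by blast
  obtain \<sigma>bar where "\<sigma>bar > 0"
    and large: "\<And>\<sigma>' x' y'. \<sigma>bar \<le> \<sigma>' \<Longrightarrow> norm (x' - xs) \<le> B
      \<Longrightarrow> (\<And>y''. Lsig A b c l u \<sigma>' y' x' \<le> Lsig A b c l u \<sigma>' y'' x')
      \<Longrightarrow> primal_sol A b c l u (prox_point A c l u \<sigma>' x' y')"
    using prox_point_primal_sol_if_sigma_large[OF xs] by blast
  show ?thesis
    using prox_subproblem_unique_solution[OF \<sigma> ne min] Lsig_minimizer_dual_sol[OF \<sigma> _ min]
      \<open>\<sigma>bar > 0\<close> large[OF _ bounded min]
    by blast
qed

end
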